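(* Let $\mathcal{X}^c=(X^c,\tau^c,\Phi^c,V^c)$ be the canonical model for $EL_{int}$. Then for every $\varphi\in\mathcal{L}_{EL_{int}}$ and every $x\in X^c$: $\varphi\in x$ iff $\mathcal{X}^c,(x,\theta^* )\models\varphi$.
   Context: Fix a countable set $\mathit{Prop}$ and a finite non-empty set $\mathcal{A}$ of agents. $\mathcal{L}_{EL_{int}}$: $\varphi ::= p \mid \neg\varphi \mid \varphi\wedge\varphi \mid K_i\varphi \mid \mathrm{int}(\varphi)$. $EL_{int}$ is the axiom system with axioms: propositional tautologies; $K_i(\varphi\to\psi)\to(K_i\varphi\to K_i\psi)$; $K_i\varphi\to\varphi$; $K_i\varphi\to K_iK_i\varphi$; $\neg K_i\varphi\to K_i\neg K_i\varphi$; $\mathrm{int}(\varphi\to\psi)\to(\mathrm{int}(\varphi)\to\mathrm{int}(\psi))$; $\mathrm{int}(\varphi)\to\varphi$; $\mathrm{int}(\varphi)\to\mathrm{int}(\mathrm{int}(\varphi))$; $K_i\varphi\to\mathrm{int}(\varphi)$; rules: modus ponens, $K_i$-necessitation, $\mathrm{int}$-necessitation. Consistent and maximally consistent sets of $\mathcal{L}_{EL_{int}}$-formulas are defined as usual w.r.t. $EL_{int}$. Canonical model: $X^c$ is the set of all maximally consistent sets; for $i\in\mathcal{A}$, $x\sim_i y$ iff for all $\varphi$, $K_i\varphi\in x\Leftrightarrow K_i\varphi\in y$; $[x]_i$ is the $\sim_i$-class of $x$; $\widehat{\varphi}=\{y\in X^c\mid\varphi\in y\}$; $\tau^c$ is the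 topology on $X^c$ generated by the subbase $\{[x]_i\cap\widehat{\mathrm{int}(\varphi)}\mid x\in X^c,\varphi\in\mathcal{L}_{EL_{int}},i\in\mathcal{A}\}$; $x\in V^c(p)$ iff $p\in x$; $\theta^*:X^c\to(\mathcal{A}\to\tau^c)$ is the total function $\theta^*(x)(i)=[x]_i$, and $\Phi^c=\{\theta^*|_U\mid U\in\tau^c\}$, where $\theta^*|_U$ has domain $U$ and $\theta^*|_U(x)(i)=[x]_i\cap U$. Semantics at $(x,\theta)$ with $x\in Dom(\theta)$: $p$ iff $x\in V^c(p)$; Booleans usual; $K_i\varphi$ iff $\varphi$ holds at $(y,\theta)$ for all $y\in\theta(x)(i)$; $\mathrm{int}(\varphi)$ iff $x\in\mathrm{Int}([\![\varphi]\!]^\theta)$ (interior in $\tau^c$), where $[\![\varphi]\!]^\theta=\{y\in Dom(\theta)\mid(y,\theta)\models\varphi\}$. *)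

theory Defs
  imports "HOL-Analysis.Analysis" "HOL-Library.Countable"
begin

text \<open>'p = propositional letters (countable), 'a = agents (finite, hence non-empty as a type).\<close>

datatype ('p, 'a) fm =
    Atom 'p
  | Neg "('p, 'a) fm"
  | Conj "('p, 'a) fm" "('p, 'a) fm"
  | K 'a "('p, 'a) fm"
  | IntOp "('p, 'a) fm"

definition Disj :: "('p,'a) fm \<Rightarrow> ('p,'a) fm \<Rightarrow> ('p,'a) fm" where
  "Disj \<phi> \<psi> = Neg (Conj (Neg \<phi>) (Neg \<psi>))"

definition Imp :: "('p,'a) fm \<Rightarrow> ('p,'a) fm \<Rightarrow> ('p,'a) fm" where
  "Imp \<phi> \<psi> = Neg (Conj \<phi> (Neg \<psi>))"

definition Top :: "('p,'a) fm" where
  "Top = Neg (Conj (Atom undefined) (Neg (Atom undefined)))"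

primrec peval :: "(('p,'a) fm \<Rightarrow> bool) \<Rightarrow> ('p,'a) fm \<Rightarrow> bool" where
  "peval v (Atom p) = v (Atom p)"
| "peval v (Neg \<phi>) = (\<not> peval v \<phi>)"
| "peval v (Conj \<phi> \<psi>) = (peval v \<phi> \<and> peval v \<psi>)"
| "peval v (K i \<phi>) = v (K i \<phi>)"
| "peval v (IntOp \<phi>) = v (IntOp \<phi>)"

definition tautology :: "('p,'a) fm \<Rightarrow> bool" where
  "tautology \<phi> \<longleftrightarrow> (\<forall>v. peval v \<phi>)"

inductive derivable :: "('p,'a) fm \<Rightarrow> bool" where
  Taut: "tautology \<phi> \<Longrightarrow> derivable \<phi>"
| K_K: "derivable (Imp (K i (Imp \<phi> \<psi>)) (Imp (K i \<phi>) (K i \<psi>)))"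
| K_T: "derivable (Imp (K i \<phi>) \<phi>)"
| K_4: "derivable (Imp (K i \<phi>) (K i (K i \<phi>)))"
| K_5: "derivable (Imp (Neg (K i \<phi>)) (K i (Neg (K i \<phi>))))"
| IntOp_K: "derivable (Imp (IntOp (Imp \<phi> \<psi>)) (Imp (IntOp \<phi>) (IntOp \<psi>)))"
| Int_T: "derivable (Imp (IntOp \<phi>) \<phi>)"
| Int_4: "derivable (Imp (IntOp \<phi>) (IntOp (IntOp \<phi>)))"
| K_Int: "derivable (Imp (K i \<phi>) (IntOp \<phi>))"
| MP: "derivable (Imp \<phi> \<psi>) \<Longrightarrow> derivable \<phi> \<Longrightarrow> derivable \<psi>"
| NecK: "derivable \<phi> \<Longrightarrow> derivable (K i \<phi>)"
| NecInt: "derivable \<phi> \<Longrightarrow> derivable (IntOp \<phi>)"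

primrec conjs :: "('p,'a) fm list \<Rightarrow> ('p,'a) fm" where
  "conjs [] = Top"
| "conjs (\<phi> # L) = Conj \<phi> (conjs L)"

definition consistent :: "('p,'a) fm set \<Rightarrow> bool" where
  "consistent \<Gamma> \<longleftrightarrow> \<not> (\<exists>L. set L \<subseteq> \<Gamma> \<and> derivable (Neg (conjs L)))"

definition maximal_consistent :: "('p,'a) fm set \<Rightarrow> bool" where
  "maximal_consistent \<Gamma> \<longleftrightarrow> consistent \<Gamma> \<and> (\<forall>\<phi>. \<phi> \<notin> \<Gamma> \<longrightarrow> \<not> consistent (insert \<phi> \<Gamma>))"

text \<open>A model is given by a topology tau, a valuation V, and a partial function theta
  whose domain is Dom and whose value at x is theta x :: 'a \<Rightarrow> 'w set.
  Semantics is only meaningful for x \<in> Dom.\<close>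
primrec sat :: "'w topology \<Rightarrow> ('p \<Rightarrow> 'w set) \<Rightarrow> 'w set \<Rightarrow> ('w \<Rightarrow> 'a \<Rightarrow> 'w set)
                 \<Rightarrow> ('p,'a) fm \<Rightarrow> 'w \<Rightarrow> bool" where
  "sat \<tau> V Dom \<theta> (Atom p) x = (x \<in> V p)"
| "sat \<tau> V Dom \<theta> (Neg \<phi>) x = (\<not> sat \<tau> V Dom \<theta> \<phi> x)"
| "sat \<tau> V Dom \<theta> (Conj \<phi> \<psi>) x = (sat \<tau> V Dom \<theta> \<phi> x \<and> sat \<tau> V Dom \<theta> \<psi> x)"
| "sat \<tau> V Dom \<theta> (K i \<phi>) x = (\<forall>y \<in> \<theta> x i. sat \<tau> V Dom \<theta> \<phi> y)"
| "sat \<tau> V Dom \<theta> (IntOp \<phi>) x = (x \<in> \<tau> interior_of {y \<in> Dom. sat \<tau> V Dom \<theta> \<phi> y})"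

definition Xc :: "('p,'a) fm set set" where
  "Xc = {x. maximal_consistent x}"

definition eqclass :: "('p,'a) fm set \<Rightarrow> 'a \<Rightarrow> ('p,'a) fm set set" where
  "eqclass x i = {y \<in> Xc. \<forall>\<phi>. K i \<phi> \<in> x \<longleftrightarrow> K i \<phi> \<in> y}"

definition hat :: "('p,'a) fm \<Rightarrow> ('p,'a) fm set set" where
  "hat \<phi> = {y \<in> Xc. \<phi> \<in> y}"

definition tau_c :: "('p,'a) fm set topology" where
  "tau_c = topology_generated_by {eqclass x i \<inter> hat (IntOp \<phi>) | x i \<phi>. x \<in> Xc}"

definition Vc :: "'p \<Rightarrow> ('p,'a) fm set set" where
  "Vc p = {x \<in> Xc. Atom p \<in> x}"

definition theta_star :: "('p,'a) fm set \<Rightarrow> 'a \<Rightarrow> ('p,'a) fm set set" where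
  "theta_star x i = eqclass x i"

text \<open>theta restricted to an open U (the elements of Phi^c); theta_star itself has domain Xc.\<close>
definition theta_restr :: "('p,'a) fm set set \<Rightarrow> ('p,'a) fm set \<Rightarrow> 'a \<Rightarrow> ('p,'a) fm set set" where
  "theta_restr U x i = eqclass x i \<inter> U"

end

theory Submission
  imports Defs
begin

text \<open>Both \<open>K\<^sub>i\<close> and \<open>int\<close> are normal modalities, and for a normal modality
  \<open>M\<close> the existence lemma holds relative to any set of formulas that are positively introspective
  for \<open>M\<close>. The \<open>K\<^sub>i\<close>-literals of \<open>x\<close> are introspective for \<open>K\<^sub>i\<close> (axioms 4 and 5) and hence for
  \<open>int\<close> (by \<open>K\<^sub>i\<psi> \<rightarrow> int \<psi>\<close>), and every \<open>int \<psi>\<close> is introspective for \<open>int\<close> (axiom 4). An MCS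
  containing the \<open>K\<^sub>i\<close>-literals of \<open>x\<close> lies in \<open>[x]\<^sub>i\<close>, and every open set around \<open>x\<close> contains an
  intersection of sets \<open>[x]\<^sub>i \<inter> hat (int \<psi>)\<close> with \<open>int \<psi> \<in> x\<close>; so if \<open>int \<phi> \<notin> x\<close>, the existence
  lemma yields a point of such a neighbourhood outside \<open>hat \<phi>\<close>.\<close>

lemma peval_Imp [simp]: "peval v (Imp a b) = (peval v a \<longrightarrow> peval v b)"
  by (simp add: Imp_def)

lemma peval_Top [simp]: "peval v Top"
  by (simp add: Top_def)

lemma peval_conjs [simp]: "peval v (conjs L) = (\<forall>a\<in>set L. peval v a)"
  by (induct L) auto

lemma derivable_tautology_MP1:
  "tautology (Imp a b) \<Longrightarrow> derivable a \<Longrightarrow> derivable b"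
  by (meson derivable.MP derivable.Taut)

lemma derivable_tautology_MP2:
  "tautology (Imp a1 (Imp a2 b)) \<Longrightarrow> derivable a1 \<Longrightarrow> derivable a2 \<Longrightarrow> derivable b"
  by (meson derivable.MP derivable.Taut)

lemma derivable_tautology_MP3:
  "tautology (Imp a1 (Imp a2 (Imp a3 b))) \<Longrightarrow> derivable a1 \<Longrightarrow> derivable a2 \<Longrightarrow> derivable a3
    \<Longrightarrow> derivable b"
  by (meson derivable.MP derivable.Taut)

subsection \<open>Maximal consistent sets\<close>

lemma inconsistent_insert_derives_Neg:
  assumes "\<not> consistent (insert \<phi> \<Gamma>)"
  obtains L where "set L \<subseteq> \<Gamma>" "derivable (Imp (conjs L) (Neg \<phi>))"
proof -
  from assms obtain L where L: "set L \<subseteq> insert \<phi> \<Gamma>" "derivable (Neg (conjs L))"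
    by (auto simp: consistent_def)
  let ?L' = "filter (\<lambda>\<psi>. \<psi> \<noteq> \<phi>) L"
  have "derivable (Imp (conjs ?L') (Neg \<phi>))"
    by (rule derivable_tautology_MP1[OF _ L(2)]) (auto simp: tautology_def)
  moreover have "set ?L' \<subseteq> \<Gamma>"
    using L(1) by auto
  ultimately show thesis
    using that by blast
qed

lemma mcs_not_derivable_Neg_conjs:
  "maximal_consistent x \<Longrightarrow> set L \<subseteq> x \<Longrightarrow> \<not> derivable (Neg (conjs L))"
  unfolding maximal_consistent_def consistent_def by blast

lemma mcs_derivable_closed:
  assumes "maximal_consistent x" "set L \<subseteq> x" "derivable (Imp (conjs L) \<psi>)"
  shows "\<psi> \<in> x"
proof (rule ccontr)
  assume "\<psi> \<notin> x"
  with assms(1) have "\<not> consistent (insert \<psi> x)"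
    by (simp add: maximal_consistent_def)
  then obtain L' where L': "set L' \<subseteq> x" "derivable (Imp (conjs L') (Neg \<psi>))"
    by (rule inconsistent_insert_derives_Neg)
  have "derivable (Neg (conjs (L @ L')))"
    by (rule derivable_tautology_MP2[OF _ assms(3) L'(2)]) (auto simp: tautology_def)
  moreover have "set (L @ L') \<subseteq> x"
    using assms(2) L'(1) by auto
  ultimately show False
    using assms(1) mcs_not_derivable_Neg_conjs by blast
qed

lemma mcs_tautology_closed:
  "maximal_consistent x \<Longrightarrow> set L \<subseteq> x \<Longrightarrow> tautology (Imp (conjs L) \<psi>) \<Longrightarrow> \<psi> \<in> x"
  by (blast intro: mcs_derivable_closed derivable.Taut)

lemma mcs_MP:
  assumes "maximal_consistent x" "derivable (Imp a b)" "a \<in> x"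
  shows "b \<in> x"
proof (rule mcs_derivable_closed[OF assms(1), of "[a]"])
  show "derivable (Imp (conjs [a]) b)"
    by (rule derivable_tautology_MP1[OF _ assms(2)]) (auto simp: tautology_def)
qed (use assms(3) in simp)

lemma mcs_Neg:
  assumes "maximal_consistent x"
  shows "Neg \<phi> \<in> x \<longleftrightarrow> \<phi> \<notin> x"
proof
  assume "Neg \<phi> \<in> x"
  show "\<phi> \<notin> x"
  proof
    assume "\<phi> \<in> x"
    with \<open>Neg \<phi> \<in> x\<close> have "set [\<phi>, Neg \<phi>] \<subseteq> x"
      by simp
    moreover have "derivable (Neg (conjs [\<phi>, Neg \<phi>]))"
      by (rule derivable.Taut) (simp add: tautology_def)
    ultimately show False
      using assms mcs_not_derivable_Neg_conjs by blast
  qed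
next
  assume "\<phi> \<notin> x"
  with assms have "\<not> consistent (insert \<phi> x)"
    by (simp add: maximal_consistent_def)
  then obtain L where "set L \<subseteq> x" "derivable (Imp (conjs L) (Neg \<phi>))"
    by (rule inconsistent_insert_derives_Neg)
  then show "Neg \<phi> \<in> x"
    by (rule mcs_derivable_closed[OF assms])
qed

lemma mcs_Conj:
  assumes "maximal_consistent x"
  shows "Conj a b \<in> x \<longleftrightarrow> a \<in> x \<and> b \<in> x"
proof
  assume "Conj a b \<in> x"
  then have L: "set [Conj a b] \<subseteq> x"
    by simp
  have "a \<in> x" "b \<in> x"
    by (rule mcs_tautology_closed[OF assms L], simp add: tautology_def)+
  then show "a \<in> x \<and> b \<in> x" ..
next
  assume "a \<in> x \<and> b \<in> x"
  then have L: "set [a, b] \<subseteq> x"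
    by simp
  show "Conj a b \<in> x"
    by (rule mcs_tautology_closed[OF assms L]) (simp add: tautology_def)
qed

lemma lindenbaum:
  assumes "consistent \<Gamma>"
  obtains y where "maximal_consistent y" "\<Gamma> \<subseteq> y"
proof -
  let ?A = "{\<Delta>. \<Gamma> \<subseteq> \<Delta> \<and> consistent \<Delta>}"
  have "\<exists>M\<in>?A. \<forall>X\<in>?A. M \<subseteq> X \<longrightarrow> X = M"
  proof (rule subset_Zorn_nonempty)
    fix C assume C: "C \<noteq> {}" "subset.chain ?A C"
    have "consistent (\<Union>C)"
      unfolding consistent_def
    proof
      assume "\<exists>L. set L \<subseteq> \<Union>C \<and> derivable (Neg (conjs L))"
      then obtain L where L: "set L \<subseteq> \<Union>C" "derivable (Neg (conjs L))"
        by blast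
      obtain D where "D \<in> C" "set L \<subseteq> D"
        using finite_subset_Union_chain[OF finite_set L(1) C] by blast
      with C(2) have "consistent D"
        by (auto simp: subset_chain_def)
      with \<open>set L \<subseteq> D\<close> L(2) show False
        unfolding consistent_def by blast
    qed
    moreover have "\<Gamma> \<subseteq> \<Union>C"
      using C unfolding subset_chain_def by blast
    ultimately show "\<Union>C \<in> ?A"
      by blast
  qed (use assms in auto)
  then obtain M where M: "M \<in> ?A" "\<forall>X\<in>?A. M \<subseteq> X \<longrightarrow> X = M"
    by blast
  have "maximal_consistent M"
    unfolding maximal_consistent_def
  proof (intro conjI allI impI notI)
    show "consistent M"
      using M(1) by simp
    fix \<phi> assume "\<phi> \<notin> M" "consistent (insert \<phi> M)"
    with M(1) have "insert \<phi> M \<in> ?A"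
      by auto
    with M(2) have "insert \<phi> M = M"
      by blast
    with \<open>\<phi> \<notin> M\<close> show False
      by blast
  qed
  with M(1) show thesis
    using that by blast
qed

subsection \<open>The existence lemma for normal modalities\<close>

definition normal_modality :: "(('p,'a) fm \<Rightarrow> ('p,'a) fm) \<Rightarrow> bool" where
  "normal_modality M \<longleftrightarrow>
     (\<forall>a b. derivable (Imp (M (Imp a b)) (Imp (M a) (M b)))) \<and> (\<forall>a. derivable a \<longrightarrow> derivable (M a))"

lemma normal_modality_K: "normal_modality (K i)"
  unfolding normal_modality_def by (auto intro: derivable.K_K derivable.NecK)

lemma normal_modality_IntOp: "normal_modality IntOp"
  unfolding normal_modality_def by (auto intro: derivable.IntOp_K derivable.NecInt)

lemma normal_modality_mono:
  assumes "normal_modality M" "derivable (Imp a b)"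
  shows "derivable (Imp (M a) (M b))"
proof -
  have "derivable (M (Imp a b))" "derivable (Imp (M (Imp a b)) (Imp (M a) (M b)))"
    using assms unfolding normal_modality_def by blast+
  then show ?thesis
    by (rule derivable.MP[rotated])
qed

lemma normal_modality_Conj:
  assumes "normal_modality M"
  shows "derivable (Imp (M a) (Imp (M b) (M (Conj a b))))"
proof -
  have "derivable (Imp a (Imp b (Conj a b)))"
    by (rule derivable.Taut) (simp add: tautology_def)
  then have "derivable (Imp (M a) (M (Imp b (Conj a b))))"
    by (rule normal_modality_mono[OF assms])
  moreover have "derivable (Imp (M (Imp b (Conj a b))) (Imp (M b) (M (Conj a b))))"
    using assms unfolding normal_modality_def by blast
  ultimately show ?thesis
    by (rule derivable_tautology_MP2[rotated]) (simp add: tautology_def)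
qed

lemma normal_modality_introspective_conjs:
  fixes M :: "('p,'a) fm \<Rightarrow> ('p,'a) fm"
  assumes "normal_modality M" "\<forall>g\<in>set L. derivable (Imp g (M g))"
  shows "derivable (Imp (conjs L) (M (conjs L)))"
  using assms(2)
proof (induct L)
  case Nil
  have "derivable (Top :: ('p,'a) fm)"
    by (rule derivable.Taut) (simp add: tautology_def)
  then have "derivable (M Top)"
    using assms(1) unfolding normal_modality_def by blast
  then show ?case
    by (rule derivable_tautology_MP1[rotated]) (simp add: tautology_def)
next
  case (Cons g L)
  then have "derivable (Imp g (M g))" "derivable (Imp (conjs L) (M (conjs L)))"
    by simp_all
  with normal_modality_Conj[OF assms(1), of g "conjs L"] show ?case
    by (rule derivable_tautology_MP3[rotated]) (simp add: tautology_def)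
qed

text \<open>If \<open>G \<turnstile> \<phi>\<close> held, introspectivity of \<open>G\<close> would give \<open>G \<turnstile> M \<phi>\<close> and hence \<open>M \<phi> \<in> x\<close>.\<close>

lemma exists_mcs_avoiding:
  assumes x: "maximal_consistent x" and M: "normal_modality M" and "G \<subseteq> x"
    and introspective: "\<And>g. g \<in> G \<Longrightarrow> derivable (Imp g (M g))" and "M \<phi> \<notin> x"
  obtains y where "maximal_consistent y" "G \<subseteq> y" "\<phi> \<notin> y"
proof -
  have "consistent (insert (Neg \<phi>) G)"
  proof (rule ccontr)
    assume "\<not> consistent (insert (Neg \<phi>) G)"
    then obtain L where L: "set L \<subseteq> G" "derivable (Imp (conjs L) (Neg (Neg \<phi>)))"
      by (rule inconsistent_insert_derives_Neg)
    have "derivable (Imp (conjs L) \<phi>)"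
      by (rule derivable_tautology_MP1[OF _ L(2)]) (simp add: tautology_def)
    then have "derivable (Imp (M (conjs L)) (M \<phi>))"
      by (rule normal_modality_mono[OF M])
    moreover have "derivable (Imp (conjs L) (M (conjs L)))"
      using normal_modality_introspective_conjs[OF M] L(1) introspective by blast
    ultimately have "derivable (Imp (conjs L) (M \<phi>))"
      by (rule derivable_tautology_MP2[rotated]) (simp add: tautology_def)
    with x L(1) \<open>G \<subseteq> x\<close> \<open>M \<phi> \<notin> x\<close> show False
      using mcs_derivable_closed by blast
  qed
  then obtain y where "maximal_consistent y" "insert (Neg \<phi>) G \<subseteq> y"
    by (rule lindenbaum)
  then show thesis
    using that mcs_Neg by blast
qed

subsection \<open>The canonical model\<close>

lemma mem_Xc_iff: "x \<in> Xc \<longleftrightarrow> maximal_consistent x"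
  by (simp add: Xc_def)

lemma eqclass_refl: "z \<in> Xc \<Longrightarrow> z \<in> eqclass z i"
  unfolding eqclass_def by blast

lemma eqclass_trans: "z \<in> eqclass w i \<Longrightarrow> y \<in> eqclass z i \<Longrightarrow> y \<in> eqclass w i"
  unfolding eqclass_def by blast

definition K_literals :: "('p,'a) fm set \<Rightarrow> 'a \<Rightarrow> ('p,'a) fm set" where
  "K_literals x i = {g \<in> x. \<exists>\<psi>. g = K i \<psi> \<or> g = Neg (K i \<psi>)}"

lemma eqclass_if_K_literals_subset:
  assumes x: "maximal_consistent x" and y: "maximal_consistent y" and "K_literals x i \<subseteq> y"
  shows "y \<in> eqclass x i"
proof -
  have "K i \<psi> \<in> x \<longleftrightarrow> K i \<psi> \<in> y" for \<psi>
    using assms mcs_Neg[OF x, of "K i \<psi>"] mcs_Neg[OF y, of "K i \<psi>"]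
    unfolding K_literals_def by blast
  with y show ?thesis
    by (simp add: eqclass_def mem_Xc_iff)
qed

lemma K_literals_introspective_K:
  assumes "g \<in> K_literals x i"
  shows "derivable (Imp g (K i g))"
proof -
  from assms obtain \<psi> where "g = K i \<psi> \<or> g = Neg (K i \<psi>)"
    unfolding K_literals_def by blast
  then show ?thesis
    using derivable.K_4 derivable.K_5 by auto
qed

lemma K_literals_introspective_IntOp:
  assumes "g \<in> K_literals x i"
  shows "derivable (Imp g (IntOp g))"
  by (rule derivable_tautology_MP2[OF _ K_literals_introspective_K[OF assms] derivable.K_Int[of i g]])
    (simp add: tautology_def)

lemma K_in_mcs_iff:
  assumes x: "maximal_consistent x"
  shows "K i \<phi> \<in> x \<longleftrightarrow> (\<forall>y\<in>eqclass x i. \<phi> \<in> y)"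
proof
  assume "K i \<phi> \<in> x"
  show "\<forall>y\<in>eqclass x i. \<phi> \<in> y"
  proof
    fix y assume "y \<in> eqclass x i"
    with \<open>K i \<phi> \<in> x\<close> have "maximal_consistent y" "K i \<phi> \<in> y"
      by (auto simp: eqclass_def mem_Xc_iff)
    then show "\<phi> \<in> y"
      by (rule mcs_MP[OF _ derivable.K_T])
  qed
next
  assume all: "\<forall>y\<in>eqclass x i. \<phi> \<in> y"
  show "K i \<phi> \<in> x"
  proof (rule ccontr)
    assume "K i \<phi> \<notin> x"
    have "K_literals x i \<subseteq> x"
      unfolding K_literals_def by blast
    then obtain y where y: "maximal_consistent y" "K_literals x i \<subseteq> y" "\<phi> \<notin> y"
      using K_literals_introspective_K \<open>K i \<phi> \<notin> x\<close>
      by (rule exists_mcs_avoiding[OF x normal_modality_K])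
    have "y \<in> eqclass x i"
      by (rule eqclass_if_K_literals_subset[OF x y(1,2)])
    with all y(3) show False
      by blast
  qed
qed

text \<open>Intersections of subbasic sets around \<open>z\<close> can use \<open>z\<close> itself as the representative of
  every equivalence class involved.\<close>

definition basic_nbhd :: "('p,'a) fm set \<Rightarrow> ('a \<times> ('p,'a) fm) set \<Rightarrow> ('p,'a) fm set set" where
  "basic_nbhd z F = {y \<in> Xc. \<forall>(i,\<psi>)\<in>F. y \<in> eqclass z i \<and> IntOp \<psi> \<in> y}"

lemma basic_nbhd_Un: "basic_nbhd z (F1 \<union> F2) = basic_nbhd z F1 \<inter> basic_nbhd z F2"
  unfolding basic_nbhd_def by auto

lemma openin_tau_c_contains_basic_nbhd:
  assumes "openin tau_c U" "z \<in> U"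
  obtains F where "z \<in> basic_nbhd z F" "basic_nbhd z F \<subseteq> U"
proof -
  have "generate_topology_on {eqclass x i \<inter> hat (IntOp \<phi>) | x i \<phi>. x \<in> Xc} U"
    using assms(1) unfolding tau_c_def by (rule openin_topology_generated_by)
  then have "\<forall>z\<in>U. \<exists>F. z \<in> basic_nbhd z F \<and> basic_nbhd z F \<subseteq> U"
  proof (induct rule: generate_topology_on.induct)
    case (Int a b)
    show ?case
    proof
      fix z assume "z \<in> a \<inter> b"
      then have "z \<in> a" "z \<in> b"
        by simp_all
      then obtain F1 F2 where "z \<in> basic_nbhd z F1" "basic_nbhd z F1 \<subseteq> a"
        "z \<in> basic_nbhd z F2" "basic_nbhd z F2 \<subseteq> b"
        using Int.hyps(2,4) by meson
      then have "z \<in> basic_nbhd z (F1 \<union> F2) \<and> basic_nbhd z (F1 \<union> F2) \<subseteq> a \<inter> b"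
        by (auto simp: basic_nbhd_Un)
      then show "\<exists>F. z \<in> basic_nbhd z F \<and> basic_nbhd z F \<subseteq> a \<inter> b" ..
    qed
  next
    case (UN K)
    then show ?case
      by (meson UnionE UnionI subset_iff)
  next
    case (Basis s)
    then obtain w i \<psi> where s: "s = eqclass w i \<inter> hat (IntOp \<psi>)"
      by blast
    show ?case
    proof
      fix z assume "z \<in> s"
      then have "z \<in> basic_nbhd z {(i,\<psi>)} \<and> basic_nbhd z {(i,\<psi>)} \<subseteq> s"
        unfolding s basic_nbhd_def hat_def using eqclass_refl eqclass_trans by auto
      then show "\<exists>F. z \<in> basic_nbhd z F \<and> basic_nbhd z F \<subseteq> s" ..
    qed
  qed simp
  with assms(2) that show thesis
    by blast
qed

lemma IntOp_in_mcs_if_basic_nbhd_subset: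
  assumes x: "maximal_consistent x" and "x \<in> basic_nbhd x F" "basic_nbhd x F \<subseteq> hat \<phi>"
  shows "IntOp \<phi> \<in> x"
proof (rule ccontr)
  assume "IntOp \<phi> \<notin> x"
  define G where "G = (\<Union>(i,\<psi>)\<in>F. insert (IntOp \<psi>) (K_literals x i))"
  have "G \<subseteq> x"
    using assms(2) unfolding G_def basic_nbhd_def K_literals_def by blast
  moreover have introspective: "derivable (Imp g (IntOp g))" if "g \<in> G" for g
  proof -
    from that obtain i \<psi> where "g = IntOp \<psi> \<or> g \<in> K_literals x i"
      unfolding G_def by blast
    then show ?thesis
      by (auto intro: K_literals_introspective_IntOp derivable.Int_4)
  qed
  ultimately obtain y where y: "maximal_consistent y" "G \<subseteq> y" "\<phi> \<notin> y"
    using \<open>IntOp \<phi> \<notin> x\<close> by (rule exists_mcs_avoiding[OF x normal_modality_IntOp])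
  have "y \<in> eqclass x i \<and> IntOp \<psi> \<in> y" if "(i,\<psi>) \<in> F" for i \<psi>
    using that y(2) eqclass_if_K_literals_subset[OF x y(1)] unfolding G_def by blast
  with y(1) have "y \<in> basic_nbhd x F"
    unfolding basic_nbhd_def by (auto simp: mem_Xc_iff)
  with assms(3) y(3) show False
    unfolding hat_def by blast
qed

lemma openin_tau_c_subbasic: "x \<in> Xc \<Longrightarrow> openin tau_c (eqclass x i \<inter> hat (IntOp \<phi>))"
  unfolding tau_c_def by (rule topology_generated_by_Basis) blast

lemma IntOp_in_mcs_iff:
  assumes x: "maximal_consistent x"
  shows "IntOp \<phi> \<in> x \<longleftrightarrow> x \<in> tau_c interior_of (hat \<phi>)"
proof
  assume "IntOp \<phi> \<in> x"
  with x have "x \<in> eqclass x i \<inter> hat (IntOp \<phi>)" for i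
    by (simp add: eqclass_refl hat_def mem_Xc_iff)
  moreover have "eqclass x i \<inter> hat (IntOp \<phi>) \<subseteq> hat \<phi>" for i
  proof
    fix y assume "y \<in> eqclass x i \<inter> hat (IntOp \<phi>)"
    then have "maximal_consistent y" "IntOp \<phi> \<in> y"
      by (auto simp: hat_def mem_Xc_iff)
    then show "y \<in> hat \<phi>"
      by (simp add: hat_def mem_Xc_iff mcs_MP[OF _ derivable.Int_T])
  qed
  moreover have "openin tau_c (eqclass x i \<inter> hat (IntOp \<phi>))" for i
    using x by (simp add: openin_tau_c_subbasic mem_Xc_iff)
  ultimately show "x \<in> tau_c interior_of (hat \<phi>)"
    unfolding interior_of_def by blast
next
  assume "x \<in> tau_c interior_of (hat \<phi>)"
  then obtain T where T: "openin tau_c T" "x \<in> T" "T \<subseteq> hat \<phi>"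
    unfolding interior_of_def by blast
  obtain F where "x \<in> basic_nbhd x F" "basic_nbhd x F \<subseteq> T"
    by (rule openin_tau_c_contains_basic_nbhd[OF T(1,2)])
  with T(3) have "x \<in> basic_nbhd x F" "basic_nbhd x F \<subseteq> hat \<phi>"
    by auto
  with x show "IntOp \<phi> \<in> x"
    by (rule IntOp_in_mcs_if_basic_nbhd_subset)
qed

theorem mainTheorem15:
  fixes \<phi> :: "('p::countable, 'a::finite) fm"
    and x :: "('p, 'a) fm set"
  assumes "x \<in> Xc"
  shows "\<phi> \<in> x \<longleftrightarrow> sat tau_c Vc Xc theta_star \<phi> x"
  using assms
proof (induct \<phi> arbitrary: x)
  case (Atom p)
  then show ?case by (simp add: Vc_def)
next
  case (Neg \<phi>)
  then show ?case by (simp add: mcs_Neg mem_Xc_iff)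
next
  case (Conj \<phi>1 \<phi>2)
  then show ?case by (simp add: mcs_Conj mem_Xc_iff)
next
  case (K i \<phi>)
  have "eqclass x i \<subseteq> Xc"
    unfolding eqclass_def by blast
  with K.hyps have "(\<forall>y\<in>eqclass x i. \<phi> \<in> y) \<longleftrightarrow> (\<forall>y\<in>eqclass x i. sat tau_c Vc Xc theta_star \<phi> y)"
    by blast
  moreover have "theta_star x i = eqclass x i"
    by (simp add: theta_star_def)
  ultimately show ?case
    using K.prems by (simp add: K_in_mcs_iff mem_Xc_iff)
next
  case (IntOp \<phi>)
  then have "{y \<in> Xc. sat tau_c Vc Xc theta_star \<phi> y} = hat \<phi>"
    unfolding hat_def by blast
  with IntOp.prems show ?case
    by (simp add: IntOp_in_mcs_iff mem_Xc_iff)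
qed

end
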